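(* A superreduced walk with excess $\xi$ has length at most $4\xi$ and spans a tree with at most $\xi+1$ vertices. Consequently its generating function $S_\xi(v,z)$ is a polynomial of degree $\xi+1$ in $v$ and $2\xi$ in $z$.
   Context: A tree walk of size $m$ and length $L$ is a sequence $W=(v_1,\dots,v_L)$ of elements of $[m]$ in which every element of $[m]$ occurs, such that the graph with vertex set $[m]$ and edges $\{v_j,v_{j+1}\}$ ($1\le j<L$) and $\{v_L,v_1\}$ is a tree; $W$ is the closed walk $v_1\to\dots\to v_L\to v_1$. Each edge is traversed $2k$ times ($k\ge1$); its excess is $k-1$; it is simple if $k=1$. The excess of $W$ is the sum of the edge excesses, i.e. $\ell-(m-1)$ for length $2\ell$ and size $m$. A superreduced walk is a tree walk with no simple edge (the one-vertex walk of length $0$ included). With $s_{m,2\ell}$ the number of superreduced walks of size $m$ and length $2\ell$, $S_\xi(v,z)=\sum_{\ell,m:\,\ell-m+1=\xi}s_{m,2\ell}\frac{v^m}{m!}z^\ell$. *)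

theory Defs
  imports "HOL-Computational_Algebra.Computational_Algebra"
begin

text \<open>A walk is a list of vertices v_1 ... v_L. Its (cyclic) steps are
  {v_j, v_(j+1)} for j < L and {v_L, v_1}.\<close>

definition step_edge :: "nat list \<Rightarrow> nat \<Rightarrow> nat set" where
  "step_edge W j = {W ! j, W ! (Suc j mod length W)}"

definition walk_edges :: "nat list \<Rightarrow> nat set set" where
  "walk_edges W = step_edge W ` {..<length W}"

definition traversals :: "nat list \<Rightarrow> nat set \<Rightarrow> nat" where
  "traversals W e = card {j. j < length W \<and> step_edge W j = e}"

definition is_tree :: "nat set \<Rightarrow> nat set set \<Rightarrow> bool" where
  "is_tree V E \<longleftrightarrow> finite V \<and> V \<noteq> {} \<and>
     (\<forall>e\<in>E. e \<subseteq> V \<and> card e = 2) \<and>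
     (\<forall>x\<in>V. \<forall>y\<in>V. (x, y) \<in> {(a, b). {a, b} \<in> E}\<^sup>*) \<and>
     card E = card V - 1"

text \<open>Tree walks of size m, vertices in [m] = {1..m}. The one-vertex walk of
  length 0 is represented by the empty list (with m = 1).\<close>
definition tree_walk :: "nat \<Rightarrow> nat list \<Rightarrow> bool" where
  "tree_walk m W \<longleftrightarrow> (W = [] \<and> m = 1) \<or>
     (W \<noteq> [] \<and> set W = {1..m} \<and> is_tree {1..m} (walk_edges W))"

definition walk_excess :: "nat list \<Rightarrow> nat" where
  "walk_excess W = (\<Sum>e\<in>walk_edges W. traversals W e div 2 - 1)"

definition simple_edge :: "nat list \<Rightarrow> nat set \<Rightarrow> bool" where
  "simple_edge W e \<longleftrightarrow> e \<in> walk_edges W \<and> traversals W e = 2"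

definition superreduced :: "nat \<Rightarrow> nat list \<Rightarrow> bool" where
  "superreduced m W \<longleftrightarrow> tree_walk m W \<and> (\<forall>e. \<not> simple_edge W e)"

definition s_count :: "nat \<Rightarrow> nat \<Rightarrow> nat" where
  "s_count m L = card {W. superreduced m W \<and> length W = L}"

text \<open>S_xi(v,z) = sum over l, m with l - m + 1 = xi of s_{m,2l} v^m/m! z^l,
  as a formal power series in z whose coefficients are polynomials in v.
  For fixed l the only m is m = l + 1 - xi (requires xi \<le> l + 1).\<close>
definition S_gf :: "nat \<Rightarrow> real poly fps" where
  "S_gf \<xi> = Abs_fps (\<lambda>l. if \<xi> \<le> l + 1
       then monom (real (s_count (l + 1 - \<xi>) (2 * l)) / fact (l + 1 - \<xi>)) (l + 1 - \<xi>)
       else 0)"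

end

theory Submission
  imports Defs
begin

text \<open>Every edge of a tree is a bridge, so a closed walk on a tree crosses each
  edge an even number of times; in a superreduced walk every edge is thus traversed
  at least four times. Summing over the m - 1 edges gives 4 (m - 1) \<le> length W
  \<le> 4 \<xi> and m - 1 \<le> \<xi>. Hence s_{m,2l} vanishes for l > 2 \<xi>, which makes
  S_\<xi> a polynomial of degree at most 2 \<xi> in z and \<xi> + 1 in v; the star with
  \<xi> leaves, each edge traversed four times, attains both degrees.\<close>

definition edge_rel :: "'a set set \<Rightarrow> ('a \<times> 'a) set" where
  "edge_rel E = {(a, b). {a, b} \<in> E}"

definition component :: "'a set set \<Rightarrow> 'a \<Rightarrow> 'a set" where
  "component E x = (edge_rel E)\<^sup>* `` {x}"

lemma equiv_rtrancl_edge_rel: "equiv UNIV ((edge_rel E)\<^sup>*)"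
  by (intro equivI refl_rtrancl sym_rtrancl trans_rtrancl)
     (auto simp: edge_rel_def sym_def insert_commute)

lemma component_eq: "(x, y) \<in> (edge_rel E)\<^sup>* \<Longrightarrow> component E x = component E y"
  unfolding component_def by (rule equiv_class_eq[OF equiv_rtrancl_edge_rel])

lemma component_eq_if_mem: "y \<in> component E x \<Longrightarrow> component E x = component E y"
  by (rule component_eq) (simp add: component_def)

lemma mem_component_self: "x \<in> component E x"
  by (simp add: component_def)

lemma component_insert_edge:
  assumes "a \<notin> component E x" "b \<notin> component E x"
  shows "component (insert {a, b} E) x = component E x"
proof
  have "edge_rel E \<subseteq> edge_rel (insert {a, b} E)" by (auto simp: edge_rel_def)
  then show "component E x \<subseteq> component (insert {a, b} E) x"
    unfolding component_def using rtrancl_mono by blast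
  show "component (insert {a, b} E) x \<subseteq> component E x"
  proof
    fix y assume "y \<in> component (insert {a, b} E) x"
    hence "(x, y) \<in> (edge_rel (insert {a, b} E))\<^sup>*" by (simp add: component_def)
    thus "y \<in> component E x"
    proof (induction rule: rtrancl_induct)
      case base
      show ?case by (rule mem_component_self)
    next
      case (step y z)
      show ?case
      proof (cases "{y, z} = {a, b}")
        case True
        then show ?thesis using step.IH assms by (auto simp: doubleton_eq_iff)
      next
        case False
        hence "(y, z) \<in> edge_rel E" using step.hyps(2) by (auto simp: edge_rel_def)
        thus ?thesis using step.IH unfolding component_def by auto
      qed
    qed
  qed
qed

text \<open>Adding an edge merges at most two components into one.\<close>

lemma card_le_card_components_add_card_edges:
  assumes "finite E" "finite V" "\<forall>e\<in>E. e \<subseteq> V \<and> card e = 2"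
  shows "card V \<le> card (component E ` V) + card E"
  using assms(1,3)
proof (induction E rule: finite_induct)
  case empty
  have "component {} x = {x}" for x
    unfolding component_def edge_rel_def by auto
  hence "inj_on (component {}) V" by (metis inj_onI singleton_inject)
  then show ?case by (simp add: card_image)
next
  case (insert e E)
  obtain a b where ab: "e = {a, b}" and V: "a \<in> V" "b \<in> V"
    using insert.prems by (auto simp: card_2_iff)
  let ?C = "component E ` V" and ?C' = "component (insert e E) ` V"
  let ?untouched = "?C - {component E a, component E b}"
  have fin: "finite ?C" "finite ?C'" using assms(2) by auto
  have "?untouched \<subseteq> ?C'"
  proof
    fix C assume "C \<in> ?untouched"
    then obtain x where x: "x \<in> V" "C = component E x"
      and "C \<noteq> component E a" "C \<noteq> component E b" by auto
    hence "a \<notin> component E x" "b \<notin> component E x"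
      using component_eq_if_mem by metis+
    hence "component (insert e E) x = C" using ab x component_insert_edge by simp
    thus "C \<in> ?C'" using x by auto
  qed
  moreover have "component (insert e E) a \<in> ?C' - ?untouched"
  proof -
    have "component (insert e E) a \<noteq> component E x" if "component E x \<noteq> component E a" for x
      using that mem_component_self component_eq_if_mem by metis
    thus ?thesis using V by auto
  qed
  ultimately have "card ?untouched < card ?C'"
    using fin by (metis Diff_iff psubsetI psubset_card_mono)
  moreover have "card ?C \<le> card ?untouched + 2"
  proof -
    have "card ?C \<le> card (?untouched \<union> {component E a, component E b})"
      using fin by (intro card_mono) auto
    also have "\<dots> \<le> card ?untouched + card {component E a, component E b}"
      by (rule card_Un_le)
    also have "card {component E a, component E b} \<le> 2"
      by (simp add: card_insert_le_m1)
    finally show ?thesis by simp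
  qed
  moreover have "card V \<le> card ?C + card E" using insert by auto
  ultimately show ?case using insert.hyps by simp
qed

lemma is_tree_edge_rel:
  "is_tree V E \<longleftrightarrow> finite V \<and> V \<noteq> {} \<and> (\<forall>e\<in>E. e \<subseteq> V \<and> card e = 2) \<and>
     (\<forall>x\<in>V. \<forall>y\<in>V. (x, y) \<in> (edge_rel E)\<^sup>*) \<and> card E = card V - 1"
  by (simp add: is_tree_def edge_rel_def)

lemma tree_edge_is_bridge:
  assumes tree: "is_tree V E" and e: "{a, b} \<in> E"
  shows "(a, b) \<notin> (edge_rel (E - {{a, b}}))\<^sup>*"
proof
  let ?E' = "E - {{a, b}}"
  assume ab: "(a, b) \<in> (edge_rel ?E')\<^sup>*"
  have edges: "\<forall>e\<in>E. e \<subseteq> V \<and> card e = 2"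
    and conn: "\<forall>x\<in>V. \<forall>y\<in>V. (x, y) \<in> (edge_rel E)\<^sup>*" and card_E: "card E = card V - 1"
    and fin_V: "finite V"
    using tree by (simp_all add: is_tree_edge_rel)
  have "E \<subseteq> Pow V" using edges by blast
  hence fin_E: "finite E" using fin_V by (simp add: finite_subset)
  have "edge_rel E \<subseteq> (edge_rel ?E')\<^sup>*"
  proof
    fix p assume "p \<in> edge_rel E"
    then obtain u v where p: "p = (u, v)" "{u, v} \<in> E" by (auto simp: edge_rel_def)
    show "p \<in> (edge_rel ?E')\<^sup>*"
    proof (cases "{u, v} = {a, b}")
      case True
      moreover have "(b, a) \<in> (edge_rel ?E')\<^sup>*"
        using ab equiv_rtrancl_edge_rel by (metis equiv_def symD)
      ultimately show ?thesis using ab p by (auto simp: doubleton_eq_iff)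
    next
      case False
      then show ?thesis using p by (auto simp: edge_rel_def)
    qed
  qed
  hence "(edge_rel E)\<^sup>* \<subseteq> (edge_rel ?E')\<^sup>*" by (rule rtrancl_subset_rtrancl)
  moreover have a: "a \<in> V" using edges e by blast
  ultimately have "component ?E' x = component ?E' a" if "x \<in> V" for x
    using conn that component_eq by (metis subsetD)
  hence "component ?E' ` V = {component ?E' a}" using a by blast
  moreover have "card V \<le> card (component ?E' ` V) + card ?E'"
    using fin_V fin_E edges by (intro card_le_card_components_add_card_edges) auto
  moreover have "card ?E' = card E - 1" using e fin_E by simp
  moreover have "card E > 0" using e fin_E card_gt_0_iff by blast
  ultimately show False using card_E by simp
qed

lemma even_card_changes_iff:
  fixes Q :: "nat \<Rightarrow> bool"
  shows "even (card {j. j < n \<and> Q j \<noteq> Q (Suc j)}) \<longleftrightarrow> Q 0 = Q n"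
proof (induction n)
  case 0
  then show ?case by simp
next
  case (Suc n)
  let ?changes = "{j. j < n \<and> Q j \<noteq> Q (Suc j)}"
  have "{j. j < Suc n \<and> Q j \<noteq> Q (Suc j)} = ?changes \<union> (if Q n \<noteq> Q (Suc n) then {n} else {})"
    by (auto simp: less_Suc_eq)
  then show ?case using Suc.IH by (cases "Q 0"; cases "Q n"; cases "Q (Suc n)") auto
qed

lemma even_card_cyclic_changes:
  fixes Q :: "nat \<Rightarrow> bool"
  assumes "L > 0"
  shows "even (card {j. j < L \<and> Q j \<noteq> Q (Suc j mod L)})"
proof -
  have "{j. j < L \<and> Q j \<noteq> Q (Suc j mod L)} = {j. j < L \<and> Q (j mod L) \<noteq> Q (Suc j mod L)}"
    by auto
  then show ?thesis using even_card_changes_iff[of L "\<lambda>j. Q (j mod L)"] by simp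
qed

lemma step_edge_in_walk_edges: "j < length W \<Longrightarrow> step_edge W j \<in> walk_edges W"
  by (simp add: walk_edges_def)

text \<open>A closed walk crosses the cut defined by a bridge an even number of times.\<close>

lemma even_traversals:
  assumes tree: "is_tree V (walk_edges W)" and e: "e \<in> walk_edges W"
  shows "even (traversals W e)"
proof -
  let ?E = "walk_edges W"
  obtain a b where ab: "e = {a, b}"
    using tree e unfolding is_tree_def by (metis card_2_iff)
  define side where "side x \<longleftrightarrow> (a, x) \<in> (edge_rel (?E - {e}))\<^sup>*" for x
  have "side a" "\<not> side b"
    using tree_edge_is_bridge[OF tree] e ab by (auto simp: side_def)
  have crosses: "side u \<noteq> side v \<longleftrightarrow> {u, v} = e" if "{u, v} \<in> ?E" for u v
  proof (cases "{u, v} = e")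
    case True
    then show ?thesis using \<open>side a\<close> \<open>\<not> side b\<close> ab by (auto simp: doubleton_eq_iff)
  next
    case False
    hence "(u, v) \<in> edge_rel (?E - {e})" "(v, u) \<in> edge_rel (?E - {e})"
      using that by (auto simp: edge_rel_def insert_commute)
    hence "side u = side v" unfolding side_def by (meson rtrancl.rtrancl_into_rtrancl)
    then show ?thesis using False by simp
  qed
  have "{j. j < length W \<and> step_edge W j = e} =
        {j. j < length W \<and> side (W ! j) \<noteq> side (W ! (Suc j mod length W))}"
    using crosses step_edge_in_walk_edges unfolding step_edge_def by (intro Collect_cong) auto
  moreover have "length W > 0" using e by (auto simp: walk_edges_def)
  ultimately show ?thesis
    unfolding traversals_def using even_card_cyclic_changes[of "length W" "\<lambda>j. side (W ! j)"] by simp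
qed

lemma traversals_pos: "e \<in> walk_edges W \<Longrightarrow> traversals W e > 0"
  unfolding walk_edges_def traversals_def by (auto simp: card_gt_0_iff)

lemma length_eq_sum_traversals: "length W = (\<Sum>e\<in>walk_edges W. traversals W e)"
  using sum.image_gen[of "{..<length W}" "\<lambda>_. 1::nat" "step_edge W"]
  unfolding walk_edges_def traversals_def by (simp add: Collect_conj_eq lessThan_def Int_commute)

lemma card_walk_edges: "tree_walk m W \<Longrightarrow> card (walk_edges W) = m - 1"
  by (auto simp: tree_walk_def is_tree_def walk_edges_def)

lemma superreduced_traversals:
  assumes "superreduced m W" "e \<in> walk_edges W"
  shows "even (traversals W e)" "traversals W e \<ge> 4"
proof -
  have "W \<noteq> []" using assms(2) by (auto simp: walk_edges_def)
  then show "even (traversals W e)"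
    using assms even_traversals unfolding superreduced_def tree_walk_def by blast
  moreover have "traversals W e \<noteq> 2" using assms by (auto simp: superreduced_def simple_edge_def)
  moreover have "traversals W e > 0" using assms(2) by (rule traversals_pos)
  ultimately show "traversals W e \<ge> 4" by presburger
qed

lemma superreduced_length_le: "superreduced m W \<Longrightarrow> length W \<le> 4 * walk_excess W"
  unfolding length_eq_sum_traversals walk_excess_def sum_distrib_left
proof (rule sum_mono)
  fix e assume "superreduced m W" "e \<in> walk_edges W"
  then show "traversals W e \<le> 4 * (traversals W e div 2 - 1)"
    using superreduced_traversals by fastforce
qed

lemma superreduced_size_le: "superreduced m W \<Longrightarrow> m \<le> walk_excess W + 1"
proof -
  assume sr: "superreduced m W"
  have "m - 1 = (\<Sum>e\<in>walk_edges W. 1)"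
    using sr card_walk_edges[of m W] by (simp add: superreduced_def)
  also have "\<dots> \<le> walk_excess W"
    unfolding walk_excess_def
    by (rule sum_mono) (use sr superreduced_traversals(2) in fastforce)
  finally show ?thesis by simp
qed

lemma superreduced_length_ge: "superreduced m W \<Longrightarrow> 4 * (m - 1) \<le> length W"
proof -
  assume sr: "superreduced m W"
  have "4 * (m - 1) = (\<Sum>e\<in>walk_edges W. 4)"
    using sr card_walk_edges[of m W] by (simp add: superreduced_def)
  also have "\<dots> \<le> length W"
    unfolding length_eq_sum_traversals
    by (rule sum_mono) (use sr superreduced_traversals(2) in blast)
  finally show ?thesis .
qed

lemma finite_superreduced_walks: "finite {W. superreduced m W \<and> length W = L}"
proof (rule finite_subset)
  show "{W. superreduced m W \<and> length W = L} \<subseteq> {W. set W \<subseteq> {0..m} \<and> length W = L}"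
    unfolding superreduced_def tree_walk_def by auto
  show "finite {W. set W \<subseteq> {0..m} \<and> length W = L}"
    by (rule finite_lists_length_eq) simp
qed

lemma s_count_eq_0_if_short:
  assumes "L < 4 * (m - 1)"
  shows "s_count m L = 0"
proof -
  have "{W. superreduced m W \<and> length W = L} = {}"
    using assms superreduced_length_ge[of m] by fastforce
  then show ?thesis unfolding s_count_def by (metis card.empty)
qed

text \<open>The star with centre 1 and leaves 2, ..., k + 1, each edge walked
  there and back twice: 1, 2, 1, 2, 1, 3, 1, 3, ...\<close>

definition star_walk :: "nat \<Rightarrow> nat list" where
  "star_walk k = map (\<lambda>j. if even j then 1 else j div 4 + 2) [0..<4 * k]"

lemma length_star_walk [simp]: "length (star_walk k) = 4 * k"
  by (simp add: star_walk_def)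

lemma step_edge_star_walk:
  assumes "j < 4 * k"
  shows "step_edge (star_walk k) j = {1, j div 4 + 2}"
proof (cases "even j")
  case True
  hence "Suc j < 4 * k" "Suc j div 4 = j div 4" using assms by presburger+
  then show ?thesis using True assms by (simp add: step_edge_def star_walk_def)
next
  case False
  hence "even (Suc j mod (4 * k))" "Suc j mod (4 * k) < 4 * k"
    using assms by (auto simp: mod_if)
  then show ?thesis using False assms by (simp add: step_edge_def star_walk_def insert_commute)
qed

lemma walk_edges_star_walk: "walk_edges (star_walk k) = (\<lambda>i. {1, i}) ` {2..k + 1}"
proof -
  have "walk_edges (star_walk k) = (\<lambda>j. {1, j div 4 + 2}) ` {..<4 * k}"
    unfolding walk_edges_def length_star_walk by (rule image_cong) (simp_all add: step_edge_star_walk)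
  also have "\<dots> = (\<lambda>i. {1, i}) ` ((\<lambda>j. j div 4 + 2) ` {..<4 * k})"
    by (simp add: image_image)
  also have "(\<lambda>j. j div 4 + 2) ` {..<4 * k} = {2..k + 1}"
  proof
    show "{2..k + 1} \<subseteq> (\<lambda>j. j div 4 + 2) ` {..<4 * k}"
    proof
      fix i assume "i \<in> {2..k + 1}"
      hence "i = 4 * (i - 2) div 4 + 2" "4 * (i - 2) < 4 * k" by auto
      thus "i \<in> (\<lambda>j. j div 4 + 2) ` {..<4 * k}" by blast
    qed
  qed auto
  finally show ?thesis .
qed

lemma set_star_walk:
  assumes "k > 0"
  shows "set (star_walk k) = {1..k + 1}"
proof
  show "set (star_walk k) \<subseteq> {1..k + 1}"
    by (auto simp: star_walk_def less_mult_imp_div_less)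
  show "{1..k + 1} \<subseteq> set (star_walk k)"
  proof
    fix i assume i: "i \<in> {1..k + 1}"
    have "i = star_walk k ! (if i = 1 then 0 else 4 * (i - 2) + 1)"
      "(if i = 1 then 0 else 4 * (i - 2) + 1) < length (star_walk k)"
      using i assms by (auto simp: star_walk_def)
    then show "i \<in> set (star_walk k)" by (metis nth_mem)
  qed
qed

lemma traversals_star_walk:
  assumes "i \<in> {2..k + 1}"
  shows "traversals (star_walk k) {1, i} = 4"
proof -
  have "{j. j < 4 * k \<and> step_edge (star_walk k) j = {1, i}} = {4 * (i - 2)..<4 * (i - 2) + 4}"
    using assms by (auto simp: step_edge_star_walk doubleton_eq_iff)
  then show ?thesis by (simp add: traversals_def)
qed

lemma is_tree_star: "is_tree {1..k + 1} ((\<lambda>i. {1, i}) ` {2..k + 1})"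
  unfolding is_tree_edge_rel
proof (intro conjI ballI)
  let ?E = "(\<lambda>i. {1::nat, i}) ` {2..k + 1}"
  have to_centre: "(x, 1) \<in> (edge_rel ?E)\<^sup>*" if "x \<in> {1..k + 1}" for x
    using that by (cases "x = 1") (auto simp: edge_rel_def insert_commute intro: r_into_rtrancl)
  fix x y assume "x \<in> {1..k + 1}" "y \<in> {1..k + 1}"
  then show "(x, y) \<in> (edge_rel ?E)\<^sup>*"
    using to_centre equiv_rtrancl_edge_rel by (meson equiv_def symD rtrancl_trans)
next
  have "inj_on (\<lambda>i. {1::nat, i}) {2..k + 1}"
    by (auto simp: inj_on_def doubleton_eq_iff)
  then show "card ((\<lambda>i. {1::nat, i}) ` {2..k + 1}) = card {1..k + 1} - 1"
    by (simp add: card_image)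
qed auto

lemma superreduced_star_walk: "superreduced (k + 1) (star_walk k)"
proof (cases "k = 0")
  case True
  then show ?thesis
    by (simp add: superreduced_def tree_walk_def simple_edge_def walk_edges_def star_walk_def)
next
  case False
  hence "star_walk k \<noteq> []" by (metis length_star_walk list.size(3) mult_is_0 zero_neq_numeral)
  then show ?thesis
    using False set_star_walk is_tree_star traversals_star_walk
    by (auto simp: superreduced_def tree_walk_def simple_edge_def walk_edges_star_walk)
qed

lemma s_count_pos: "s_count (k + 1) (4 * k) > 0"
  using superreduced_star_walk[of k] finite_superreduced_walks[of "k + 1" "4 * k"]
  by (auto simp: s_count_def card_gt_0_iff)

lemma fps_eq_fps_of_poly_truncate:
  assumes "\<And>i. i > n \<Longrightarrow> f $ i = 0"
  shows "f = fps_of_poly (truncate_fps (Suc n) f)"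
  using assms by (intro fps_ext) (simp add: coeff_truncate_fps)

lemma degree_truncate_fps_eq:
  assumes "\<And>i. i > n \<Longrightarrow> f $ i = 0" "f $ n \<noteq> 0"
  shows "degree (truncate_fps (Suc n) f) = n"
proof (rule antisym)
  show "degree (truncate_fps (Suc n) f) \<le> n"
    by (rule degree_le) (simp add: coeff_truncate_fps)
  show "n \<le> degree (truncate_fps (Suc n) f)"
    using assms(2) by (intro le_degree) (simp add: coeff_truncate_fps)
qed

lemma S_gf_nth:
  "S_gf \<xi> $ l = (if \<xi> \<le> l + 1
     then monom (real (s_count (l + 1 - \<xi>) (2 * l)) / fact (l + 1 - \<xi>)) (l + 1 - \<xi>) else 0)"
  by (simp add: S_gf_def)

lemma S_gf_nth_eq_0: "2 * \<xi> < l \<Longrightarrow> S_gf \<xi> $ l = 0"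
  using s_count_eq_0_if_short[of "2 * l" "l + 1 - \<xi>"] by (simp add: S_gf_nth)

lemma degree_S_gf_nth_le: "degree (S_gf \<xi> $ l) \<le> \<xi> + 1"
proof (cases "2 * \<xi> < l")
  case True
  then show ?thesis by (simp add: S_gf_nth_eq_0)
next
  case False
  have "degree (S_gf \<xi> $ l) \<le> l + 1 - \<xi>"
    unfolding S_gf_nth by (simp add: degree_monom_le)
  with False show ?thesis by linarith
qed

lemma degree_S_gf_nth_top: "degree (S_gf \<xi> $ (2 * \<xi>)) = \<xi> + 1"
  using s_count_pos[of \<xi>] by (simp add: S_gf_nth degree_monom_eq mult.assoc)

theorem proposition2:
  shows "(\<forall>m W. superreduced m W \<longrightarrow>
            length W \<le> 4 * walk_excess W \<and> m \<le> walk_excess W + 1) \<and>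
         (\<forall>\<xi>. \<exists>p :: real poly poly. S_gf \<xi> = fps_of_poly p \<and>
            degree p = 2 * \<xi> \<and>
            (\<forall>i. degree (coeff p i) \<le> \<xi> + 1) \<and>
            (\<exists>i. degree (coeff p i) = \<xi> + 1))"
proof (intro conjI allI impI)
  fix m W
  assume "superreduced m W"
  then show "length W \<le> 4 * walk_excess W" "m \<le> walk_excess W + 1"
    using superreduced_length_le superreduced_size_le by blast+
next
  fix \<xi> :: nat
  let ?p = "truncate_fps (Suc (2 * \<xi>)) (S_gf \<xi>)"
  have top: "S_gf \<xi> $ (2 * \<xi>) \<noteq> 0"
    using degree_S_gf_nth_top[of \<xi>] by auto
  have "S_gf \<xi> = fps_of_poly ?p"
    using S_gf_nth_eq_0 by (rule fps_eq_fps_of_poly_truncate)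
  moreover have "degree ?p = 2 * \<xi>"
    using S_gf_nth_eq_0 top by (rule degree_truncate_fps_eq)
  moreover have "degree (coeff ?p i) \<le> \<xi> + 1" for i
    using degree_S_gf_nth_le by (simp add: coeff_truncate_fps)
  moreover have "degree (coeff ?p (2 * \<xi>)) = \<xi> + 1"
    using degree_S_gf_nth_top by (simp add: coeff_truncate_fps)
  ultimately show "\<exists>p :: real poly poly. S_gf \<xi> = fps_of_poly p \<and> degree p = 2 * \<xi> \<and>
      (\<forall>i. degree (coeff p i) \<le> \<xi> + 1) \<and> (\<exists>i. degree (coeff p i) = \<xi> + 1)"
    by blast
qed

end
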